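(* Let $\mathcal D_{\mathrm{cost}}$ be a distribution on $\mathbb R_{\ge0}$ with mean $1$, let $n\ge1$, and let $x_1,\dots,x_n$ be i.i.d. from $\mathcal D_{\mathrm{cost}}$. Let $\Delta(x_1,\dots,x_n)$ be the minimum number of the $x_i$ that must be removed so that the sum of the remaining ones is at most $n$. Then for every $v>0$, $$\Pr[\Delta(x_1,\dots,x_n)\ge v]\le\frac2v+\frac{4n}{v^2}.$$ *)

theory Defs
  imports "HOL-Probability.Probability"
begin

definition Delta :: "nat \<Rightarrow> (nat \<Rightarrow> real) \<Rightarrow> nat" where
  "Delta n x = Min {card S | S. S \<subseteq> {..<n} \<and> (\<Sum>i\<in>{..<n} - S. x i) \<le> real n}"

end

theory Submission
  imports Defs
begin

text \<open>If more than \<open>m\<close> of the values must be removed, then removing the \<open>m\<close> largest ones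
  still leaves a sum above \<open>n\<close>. With \<open>u\<close> the largest remaining value this gives
  \<open>u \<ge> n / (n - m)\<close> and, truncating every value at \<open>u\<close>, a total of at least \<open>n + m u\<close>.
  Truncated at a level \<open>t\<close>, a value has mean at most 1 and variance at most \<open>t\<close>, so by
  Chebyshev the truncated sum exceeds \<open>n + d\<close> with probability at most \<open>n t / d\<^sup>2\<close>. A union
  bound over the dyadic ranges \<open>a 2\<^sup>j \<le> u \<le> a 2\<^sup>j\<^sup>+\<^sup>1\<close>, \<open>a = n / (n - m)\<close>, sums to
  \<open>4 (n - m) / m\<^sup>2\<close>, which is at most \<open>4 n / v\<^sup>2\<close> for \<open>m = \<lceil>v\<rceil> - 1\<close> as soon as \<open>v > 2\<close>
  and \<open>v\<^sup>2 > 4 n\<close>; in the remaining cases the claimed bound is at least 1.\<close>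

lemma integral_PiM_component:
  fixes h :: "'a \<Rightarrow> real"
  assumes "prob_space D" "i \<in> I" "h \<in> borel_measurable D"
  shows "(\<integral>x. h (x i) \<partial>PiM I (\<lambda>_. D)) = (\<integral>y. h y \<partial>D)"
proof -
  have "(\<integral>y. h y \<partial>D) = (\<integral>y. h y \<partial>distr (PiM I (\<lambda>_. D)) D (\<lambda>x. x i))"
    using distr_PiM_component[of I "\<lambda>_. D" i] assms by simp
  also have "\<dots> = (\<integral>x. h (x i) \<partial>PiM I (\<lambda>_. D))"
    using assms by (intro integral_distr) auto
  finally show ?thesis by simp
qed

lemma integral_PiM_mult_components:
  fixes g h :: "'a \<Rightarrow> real"
  assumes "prob_space D" "finite I" "i \<in> I" "k \<in> I" "i \<noteq> k"
    and "integrable D g" "integrable D h"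
  shows "(\<integral>x. g (x i) * h (x k) \<partial>PiM I (\<lambda>_. D)) = (\<integral>y. g y \<partial>D) * (\<integral>y. h y \<partial>D)"
proof -
  interpret D: prob_space D by fact
  interpret product_prob_space "\<lambda>_. D" I by unfold_locales
  define f where "f l = (if l = i then g else if l = k then h else (\<lambda>_. 1))" for l
  have "(\<integral>x. g (x i) * h (x k) \<partial>PiM I (\<lambda>_. D)) = (\<integral>x. (\<Prod>l\<in>I. f l (x l)) \<partial>PiM I (\<lambda>_. D))"
  proof (rule Bochner_Integration.integral_cong[OF refl])
    fix x
    have "(\<Prod>l\<in>I. f l (x l)) = (\<Prod>l\<in>{i, k}. f l (x l))"
      by (rule prod.mono_neutral_right) (use assms in \<open>auto simp: f_def\<close>)
    then show "g (x i) * h (x k) = (\<Prod>l\<in>I. f l (x l))"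
      using assms by (simp add: f_def)
  qed
  also have "\<dots> = (\<Prod>l\<in>I. \<integral>y. f l y \<partial>D)"
    by (rule product_integral_prod) (use assms in \<open>auto simp: f_def\<close>)
  also have "\<dots> = (\<Prod>l\<in>{i, k}. \<integral>y. f l y \<partial>D)"
    by (rule prod.mono_neutral_right) (use assms in \<open>auto simp: f_def D.prob_space\<close>)
  finally show ?thesis
    using assms by (simp add: f_def)
qed

lemma integral_PiM_square_sum_components:
  fixes g :: "'a \<Rightarrow> real"
  assumes "prob_space D" "finite I" and [measurable]: "g \<in> borel_measurable D"
    and "\<And>y. \<bar>g y\<bar> \<le> B" "(\<integral>y. g y \<partial>D) = 0"
  shows "(\<integral>x. (\<Sum>i\<in>I. g (x i))\<^sup>2 \<partial>PiM I (\<lambda>_. D)) = card I * (\<integral>y. (g y)\<^sup>2 \<partial>D)"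
proof -
  interpret D: prob_space D by fact
  interpret P: product_prob_space "\<lambda>_. D" I by unfold_locales
  have int_g: "integrable D g"
    by (rule D.integrable_const_bound[where B=B]) (use assms in auto)
  have int_gg: "integrable (PiM I (\<lambda>_. D)) (\<lambda>x. g (x i) * g (x k))" if "i \<in> I" "k \<in> I" for i k
    by (rule P.integrable_const_bound[where B="B * B"])
      (use that assms(4) in \<open>auto simp: abs_mult intro!: always_eventually mult_mono order_trans[OF abs_ge_zero]
        borel_measurable_times measurable_compose[OF measurable_component_singleton]\<close>)
  have moment: "(\<integral>x. g (x i) * g (x k) \<partial>PiM I (\<lambda>_. D)) = (if i = k then \<integral>y. (g y)\<^sup>2 \<partial>D else 0)"
    if "i \<in> I" "k \<in> I" for i k
  proof (cases "i = k")
    case True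
    then show ?thesis
      using integral_PiM_component[of D i I "\<lambda>y. (g y)\<^sup>2"] assms that by (simp add: power2_eq_square)
  next
    case False
    then show ?thesis
      using integral_PiM_mult_components[OF assms(1,2) that False int_g int_g] assms by simp
  qed
  have "(\<integral>x. (\<Sum>i\<in>I. g (x i))\<^sup>2 \<partial>PiM I (\<lambda>_. D))
      = (\<integral>x. (\<Sum>i\<in>I. \<Sum>k\<in>I. g (x i) * g (x k)) \<partial>PiM I (\<lambda>_. D))"
    by (simp add: power2_eq_square sum_product)
  also have "\<dots> = (\<Sum>i\<in>I. \<Sum>k\<in>I. \<integral>x. g (x i) * g (x k) \<partial>PiM I (\<lambda>_. D))"
    using int_gg by (simp add: Bochner_Integration.integral_sum integrable_sum)
  also have "\<dots> = (\<Sum>i\<in>I. \<integral>y. (g y)\<^sup>2 \<partial>D)"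
    using assms(2) by (simp add: moment cong: sum.cong)
  finally show ?thesis by simp
qed

lemma (in prob_space) variance_le_of_bounded:
  fixes f :: "'a \<Rightarrow> real"
  assumes [measurable]: "f \<in> borel_measurable M" and "\<And>x. 0 \<le> f x" "\<And>x. f x \<le> t"
  shows "variance f \<le> t * expectation f"
proof -
  have int_f: "integrable M f"
    by (rule integrable_const_bound[where B=t]) (use assms in \<open>auto intro!: always_eventually\<close>)
  have "(f x)\<^sup>2 \<le> t\<^sup>2" for x
    using assms by (intro power_mono) auto
  then have int_f2: "integrable M (\<lambda>x. (f x)\<^sup>2)"
    by (intro integrable_const_bound[where B="t\<^sup>2"]) (auto intro!: always_eventually)
  have "variance f = expectation (\<lambda>x. (f x)\<^sup>2) - (expectation f)\<^sup>2"
    using int_f int_f2 by (rule variance_eq)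
  also have "\<dots> \<le> expectation (\<lambda>x. (f x)\<^sup>2)"
    by simp
  also have "\<dots> \<le> expectation (\<lambda>x. t * f x)"
    using int_f int_f2 assms(2,3)
    by (intro integral_mono) (auto simp: power2_eq_square intro: mult_right_mono)
  finally show ?thesis by simp
qed

lemma prob_sum_components_ge_le:
  fixes g :: "'a \<Rightarrow> real"
  assumes "prob_space D" "finite I" and [measurable]: "g \<in> borel_measurable D"
    and "\<And>y. \<bar>g y\<bar> \<le> B" "(\<integral>y. g y \<partial>D) = 0" "0 < d"
  shows "measure (PiM I (\<lambda>_. D)) {x \<in> space (PiM I (\<lambda>_. D)). d \<le> (\<Sum>i\<in>I. g (x i))}
    \<le> real (card I) * (\<integral>y. (g y)\<^sup>2 \<partial>D) / d\<^sup>2"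
proof -
  interpret D: prob_space D by fact
  interpret P: product_prob_space "\<lambda>_. D" I by unfold_locales
  let ?M = "PiM I (\<lambda>_. D)"
  define X where "X x = (\<Sum>i\<in>I. g (x i))" for x
  have [measurable]: "X \<in> borel_measurable ?M"
    unfolding X_def by measurable
  have X_mean: "P.expectation X = 0"
    unfolding X_def using assms(1,4,5)
    by (subst Bochner_Integration.integral_sum)
      (auto simp: integral_PiM_component intro!: P.integrable_const_bound[where B=B])
  have "\<bar>X x\<bar> \<le> real (card I) * B" for x
  proof -
    have "\<bar>X x\<bar> \<le> (\<Sum>i\<in>I. \<bar>g (x i)\<bar>)"
      unfolding X_def by (rule sum_abs)
    also have "\<dots> \<le> (\<Sum>i\<in>I. B)"
      by (intro sum_mono assms(4))
    finally show ?thesis by simp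
  qed
  then have "(X x)\<^sup>2 \<le> (real (card I) * B)\<^sup>2" for x
    by (metis abs_le_square_iff abs_of_nonneg abs_ge_zero order.trans power2_abs)
  then have int_X2: "integrable ?M (\<lambda>x. (X x)\<^sup>2)"
    by (intro P.integrable_const_bound[where B="(real (card I) * B)\<^sup>2"])
      (auto intro!: always_eventually)
  have "P.prob {x \<in> space ?M. d \<le> X x} \<le> P.prob {x \<in> space ?M. d \<le> \<bar>X x - P.expectation X\<bar>}"
    using X_mean by (intro P.finite_measure_mono) auto
  also have "\<dots> \<le> P.variance X / d\<^sup>2"
    by (rule P.Chebyshev_inequality) (use int_X2 assms(6) in auto)
  also have "P.variance X = real (card I) * (\<integral>y. (g y)\<^sup>2 \<partial>D)"
    using X_mean integral_PiM_square_sum_components[OF assms(1-5)] unfolding X_def by simp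
  finally show ?thesis
    unfolding X_def .
qed

lemma prob_truncated_sum_ge:
  fixes D :: "real measure" and I :: "'i set"
  assumes "prob_space D" "sets D = sets borel" "AE y in D. 0 \<le> y"
    and "integrable D (\<lambda>y. y)" "(\<integral>y. y \<partial>D) \<le> 1" "finite I" "0 < t" "0 < d"
  shows "measure (PiM I (\<lambda>_. D))
      {x \<in> space (PiM I (\<lambda>_. D)). real (card I) + d \<le> (\<Sum>i\<in>I. min (x i) t)}
    \<le> real (card I) * t / d\<^sup>2"
proof -
  interpret D: prob_space D by fact
  interpret P: product_prob_space "\<lambda>_. D" I by unfold_locales
  let ?M = "PiM I (\<lambda>_. D)"
  define f where "f y = max 0 (min y t)" for y :: real
  have [measurable]: "f \<in> borel_measurable D"
    unfolding f_def by (simp add: measurable_cong_sets[OF assms(2) refl])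
  have f_bounds: "0 \<le> f y" "f y \<le> t" for y
    using assms(7) by (auto simp: f_def)
  have int_f: "integrable D f"
    by (rule D.integrable_const_bound[where B=t]) (use f_bounds in \<open>auto intro!: always_eventually\<close>)
  define \<mu> where "\<mu> = D.expectation f"
  have \<mu>_nonneg: "0 \<le> \<mu>"
    unfolding \<mu>_def using f_bounds by simp
  have "\<mu> \<le> (\<integral>y. y \<partial>D)"
    unfolding \<mu>_def by (rule integral_mono_AE[OF int_f assms(4)]) (use assms(3) in \<open>auto simp: f_def\<close>)
  then have \<mu>_le_1: "\<mu> \<le> 1"
    using assms(5) by simp
  define g where "g y = f y - \<mu>" for y
  have [measurable]: "g \<in> borel_measurable D"
    unfolding g_def by measurable
  have g_bound: "\<bar>g y\<bar> \<le> t + 1" for y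
    using f_bounds[of y] \<mu>_nonneg \<mu>_le_1 unfolding g_def by auto
  have g_mean: "(\<integral>y. g y \<partial>D) = 0"
    unfolding g_def \<mu>_def using int_f by (simp add: D.prob_space)
  have "(\<integral>y. (g y)\<^sup>2 \<partial>D) = D.variance f"
    unfolding g_def \<mu>_def ..
  also have "\<dots> \<le> t * \<mu>"
    unfolding \<mu>_def by (rule D.variance_le_of_bounded) (use f_bounds in auto)
  also have "\<dots> \<le> t"
    using \<mu>_le_1 assms(7) by (simp add: mult_left_le)
  finally have g_second_moment: "(\<integral>y. (g y)\<^sup>2 \<partial>D) \<le> t" .
  have "{x \<in> space ?M. real (card I) + d \<le> (\<Sum>i\<in>I. min (x i) t)}
      \<subseteq> {x \<in> space ?M. d \<le> (\<Sum>i\<in>I. g (x i))}"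
  proof safe
    fix x assume "real (card I) + d \<le> (\<Sum>i\<in>I. min (x i) t)"
    also have "\<dots> \<le> (\<Sum>i\<in>I. f (x i))"
      by (rule sum_mono) (simp add: f_def)
    also have "\<dots> = (\<Sum>i\<in>I. g (x i)) + real (card I) * \<mu>"
      by (simp add: g_def sum_subtractf)
    also have "\<dots> \<le> (\<Sum>i\<in>I. g (x i)) + real (card I)"
      using \<mu>_le_1 by (simp add: mult_left_le)
    finally show "d \<le> (\<Sum>i\<in>I. g (x i))"
      by simp
  qed
  then have "P.prob {x \<in> space ?M. real (card I) + d \<le> (\<Sum>i\<in>I. min (x i) t)}
      \<le> P.prob {x \<in> space ?M. d \<le> (\<Sum>i\<in>I. g (x i))}"
    by (intro P.finite_measure_mono) measurable
  also have "\<dots> \<le> real (card I) * (\<integral>y. (g y)\<^sup>2 \<partial>D) / d\<^sup>2"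
    by (rule prob_sum_components_ge_le[OF assms(1,6) _ g_bound g_mean assms(8)]) measurable
  also have "\<dots> \<le> real (card I) * t / d\<^sup>2"
    using g_second_moment by (simp add: divide_right_mono mult_left_mono)
  finally show ?thesis .
qed

lemma exists_subset_of_largest:
  fixes x :: "'a \<Rightarrow> 'b::linorder"
  assumes "finite I" "m \<le> card I"
  shows "\<exists>S\<subseteq>I. card S = m \<and> (\<forall>i\<in>S. \<forall>k\<in>I - S. x k \<le> x i)"
  using assms(2)
proof (induction m)
  case 0
  then show ?case by auto
next
  case (Suc m)
  then obtain S where S: "S \<subseteq> I" "card S = m" "\<forall>i\<in>S. \<forall>k\<in>I - S. x k \<le> x i"
    by auto
  have "I - S \<noteq> {}"
    using S Suc.prems card_mono[OF assms(1), of S] by auto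
  then obtain j where j: "j \<in> I - S" "Max (x ` (I - S)) = x j"
    using obtains_MAX[of "I - S" x] assms(1) by blast
  have "x k \<le> x j" if "k \<in> I - S" for k
    using j(2) Max_ge[of "x ` (I - S)" "x k"] that assms(1) by auto
  then show ?case
    using S j assms(1) by (intro exI[of _ "insert j S"]) (auto simp: finite_subset)
qed

lemma Delta_le_card:
  assumes "S \<subseteq> {..<n}" "(\<Sum>i\<in>{..<n} - S. x i) \<le> real n"
  shows "Delta n x \<le> card S"
  unfolding Delta_def
  by (rule Min_le) (use assms in \<open>auto intro: finite_subset[of _ "card ` Pow {..<n}"]\<close>)

lemma Delta_le: "Delta n x \<le> n"
  using Delta_le_card[of "{..<n}" n x] by simp

lemma truncated_sum_ge_if_less_Delta:
  fixes x :: "nat \<Rightarrow> real"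
  assumes "m < n" "m < Delta n x"
  shows "\<exists>u \<ge> real n / real (n - m). real n + real m * u \<le> (\<Sum>i<n. min (x i) u)"
proof -
  obtain S where S: "S \<subseteq> {..<n}" "card S = m" "\<forall>i\<in>S. \<forall>k\<in>{..<n} - S. x k \<le> x i"
    using exists_subset_of_largest[of "{..<n}" m x] assms(1) by auto
  define R where "R = {..<n} - S"
  have card_R: "card R = n - m"
    unfolding R_def using S by (simp add: card_Diff_subset finite_subset)
  have R: "finite R" "R \<noteq> {}"
    using card_R assms(1) by (auto intro: card_ge_0_finite)
  have sum_R: "real n < (\<Sum>i\<in>R. x i)"
    using Delta_le_card[OF S(1), of x] assms(2) S(2) unfolding R_def by linarith
  define u where "u = Max (x ` R)"
  have below_u: "x k \<le> u" if "k \<in> R" for k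
    using R that unfolding u_def by simp
  have above_u: "u \<le> x i" if "i \<in> S" for i
    using R S(3) that Max_in[of "x ` R"] unfolding u_def R_def by auto
  have "(\<Sum>i\<in>R. x i) \<le> real (n - m) * u"
    using sum_mono[of R x "\<lambda>_. u", OF below_u] card_R by simp
  then have "real n / real (n - m) \<le> u"
    using sum_R assms(1) by (simp add: divide_le_eq mult.commute)
  moreover have "(\<Sum>i<n. min (x i) u) = (\<Sum>i\<in>R. x i) + real m * u"
  proof -
    have "(\<Sum>i<n. min (x i) u) = (\<Sum>i\<in>R. min (x i) u) + (\<Sum>i\<in>S. min (x i) u)"
      unfolding R_def by (rule sum.subset_diff[OF S(1)]) simp
    also have "\<dots> = (\<Sum>i\<in>R. x i) + (\<Sum>i\<in>S. u)"
      using below_u above_u by (intro arg_cong2[where f="(+)"] sum.cong) auto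
    finally show ?thesis
      using S(2) by simp
  qed
  ultimately show ?thesis
    using sum_R by (intro exI[of _ u]) auto
qed

lemma exists_power_of_two_bracket:
  fixes y :: real
  assumes "1 \<le> y"
  shows "\<exists>j::nat. 2 ^ j \<le> y \<and> y \<le> 2 ^ Suc j"
proof -
  define j where "j = nat \<lfloor>log 2 y\<rfloor>"
  have "\<lfloor>log 2 y\<rfloor> = int j"
    using assms unfolding j_def by simp
  then have "2 powr real j \<le> y \<and> y < 2 powr (real j + 1)"
    using assms floor_log_eq_powr_iff[of y 2 "int j"] by simp
  then show ?thesis
    by (intro exI[of _ j]) (simp add: powr_realpow[symmetric] powr_add)
qed

lemma dyadic_truncated_sum_ge_if_less_Delta:
  fixes x :: "nat \<Rightarrow> real"
  assumes "m < n" "m < Delta n x"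
  defines "a \<equiv> real n / real (n - m)"
  shows "\<exists>j. real n + real m * (a * 2 ^ j) \<le> (\<Sum>i<n. min (x i) (a * 2 ^ Suc j))"
proof -
  obtain u where u: "a \<le> u" "real n + real m * u \<le> (\<Sum>i<n. min (x i) u)"
    using truncated_sum_ge_if_less_Delta[OF assms(1,2)] unfolding a_def by blast
  have a_pos: "0 < a"
    using assms(1) unfolding a_def by simp
  obtain j where j: "2 ^ j \<le> u / a" "u / a \<le> 2 ^ Suc j"
    using exists_power_of_two_bracket[of "u / a"] u(1) a_pos by auto
  have "real n + real m * (a * 2 ^ j) \<le> real n + real m * u"
    using j(1) a_pos by (intro add_left_mono mult_left_mono) (simp_all add: le_divide_eq mult.commute)
  also have "\<dots> \<le> (\<Sum>i<n. min (x i) u)"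
    by (fact u(2))
  also have "\<dots> \<le> (\<Sum>i<n. min (x i) (a * 2 ^ Suc j))"
    using j(2) a_pos by (intro sum_mono) (simp add: divide_le_eq mult.commute min.coboundedI2)
  finally show ?thesis ..
qed

lemma prob_less_Delta_le:
  fixes D :: "real measure"
  assumes "prob_space D" "sets D = sets borel" "AE y in D. 0 \<le> y"
    and "integrable D (\<lambda>y. y)" "(\<integral>y. y \<partial>D) \<le> 1" "1 \<le> m" "m < n"
  shows "measure (PiM {..<n} (\<lambda>_. D)) {x \<in> space (PiM {..<n} (\<lambda>_. D)). m < Delta n x}
    \<le> 4 * (real n - real m) / (real m)\<^sup>2"
proof -
  let ?M = "PiM {..<n} (\<lambda>_. D)"
  interpret P: prob_space ?M
    using assms(1) by (intro prob_space_PiM)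
  define a where "a = real n / real (n - m)"
  have a_pos: "0 < a"
    using assms(7) unfolding a_def by simp
  define c where "c = 2 * real n / (a * (real m)\<^sup>2)"
  define A where "A j = {x \<in> space ?M.
    real n + real m * (a * 2 ^ j) \<le> (\<Sum>i<n. min (x i) (a * 2 ^ Suc j))}" for j :: nat
  have [measurable]: "(\<lambda>x. x i) \<in> borel_measurable ?M" if "i < n" for i
    using measurable_component_singleton[of i "{..<n}" "\<lambda>_. D"] that
      measurable_cong_sets[OF refl assms(2), of ?M] by auto
  have A_events: "A j \<in> P.events" for j
    unfolding A_def by measurable
  have prob_A: "P.prob (A j) \<le> c * (1 / 2) ^ j" for j
  proof -
    have "P.prob (A j) \<le> real n * (a * 2 ^ Suc j) / (real m * (a * 2 ^ j))\<^sup>2"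
      using prob_truncated_sum_ge[OF assms(1-5), of "{..<n}" "a * 2 ^ Suc j" "real m * (a * 2 ^ j)"]
        a_pos assms(6) unfolding A_def by simp
    also have "\<dots> = c * (1 / 2) ^ j"
      unfolding c_def using a_pos assms(6)
      by (simp add: power_one_over power2_eq_square field_simps)
    finally show ?thesis .
  qed
  have summable_A: "summable (\<lambda>j. P.prob (A j))"
    by (rule summable_comparison_test'[of "\<lambda>j. c * (1 / 2) ^ j" 0]) (use prob_A in auto)
  have "{x \<in> space ?M. m < Delta n x} \<subseteq> (\<Union>j. A j)"
    using dyadic_truncated_sum_ge_if_less_Delta[OF assms(7)] unfolding A_def a_def by blast
  then have "P.prob {x \<in> space ?M. m < Delta n x} \<le> P.prob (\<Union>j. A j)"
    using A_events by (intro P.finite_measure_mono) auto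
  also have "\<dots> \<le> (\<Sum>j. P.prob (A j))"
    using A_events summable_A by (intro P.finite_measure_subadditive_countably) auto
  also have "\<dots> \<le> (\<Sum>j. c * (1 / 2) ^ j)"
    using prob_A summable_A by (intro suminf_le) auto
  also have "\<dots> = 2 * c"
    using suminf_geometric[of "1 / 2 :: real"] suminf_mult[of "\<lambda>j. (1 / 2 :: real) ^ j" c] by simp
  also have "\<dots> = 4 * (real n - real m) / (real m)\<^sup>2"
    unfolding c_def a_def using assms(6,7) by (simp add: of_nat_diff field_simps)
  finally show ?thesis .
qed

lemma diff_div_square_le_div_square:
  fixes n m v :: real
  assumes "1 \<le> m" "0 \<le> n" "0 < v" "v \<le> m + 1" "4 * n \<le> v\<^sup>2"
  shows "(n - m) / m\<^sup>2 \<le> n / v\<^sup>2"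
proof -
  have v_sq: "v\<^sup>2 \<le> (m + 1)\<^sup>2"
    using assms by (intro power_mono) auto
  have "4 * n \<le> (m + 1)\<^sup>2"
    using assms(5) v_sq by linarith
  then have "4 * n * (2 * m + 1) \<le> (m + 1)\<^sup>2 * (4 * m)"
    using assms(1,2) by (intro mult_mono) auto
  then have "(n - m) * (m + 1)\<^sup>2 \<le> n * m\<^sup>2"
    by (simp add: power2_eq_square algebra_simps)
  then have "(n - m) / m\<^sup>2 \<le> n / (m + 1)\<^sup>2"
    using assms(1) by (simp add: divide_le_eq le_divide_eq mult.commute)
  also have "\<dots> \<le> n / v\<^sup>2"
    using assms v_sq by (intro divide_left_mono) auto
  finally show ?thesis .
qed

lemma prob_le_Delta_le:
  fixes D :: "real measure"
  assumes "prob_space D" "sets D = sets borel" "AE y in D. 0 \<le> y"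
    and "integrable D (\<lambda>y. y)" "(\<integral>y. y \<partial>D) \<le> 1" "2 < v" "4 * real n < v\<^sup>2"
  shows "measure (PiM {..<n} (\<lambda>_. D)) {x \<in> space (PiM {..<n} (\<lambda>_. D)). v \<le> real (Delta n x)}
    \<le> 4 * real n / v\<^sup>2"
proof -
  let ?M = "PiM {..<n} (\<lambda>_. D)"
  define m where "m = nat \<lceil>v\<rceil> - 1"
  have m: "real m < v" "v \<le> real m + 1" "1 \<le> m"
    using assms(6) unfolding m_def by (auto simp: of_nat_diff) linarith+
  have "v \<le> real k \<longleftrightarrow> m < k" for k
    using m by (auto simp: m_def) linarith+
  then have E: "{x \<in> space ?M. v \<le> real (Delta n x)} = {x \<in> space ?M. m < Delta n x}"
    by simp
  show ?thesis
  proof (cases "m < n")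
    case True
    have "measure ?M {x \<in> space ?M. m < Delta n x} \<le> 4 * (real n - real m) / (real m)\<^sup>2"
      using assms(1-5) m(3) True by (intro prob_less_Delta_le) auto
    also have "\<dots> \<le> 4 * real n / v\<^sup>2"
      using mult_left_mono[OF diff_div_square_le_div_square[of "real m" "real n" v], of 4]
        m assms(6,7) by simp
    finally show ?thesis
      unfolding E .
  next
    case False
    then have empty: "{x \<in> space ?M. m < Delta n x} = {}"
      using Delta_le[of n] by (auto simp: not_less intro: le_trans)
    show ?thesis
      unfolding E empty by simp
  qed
qed

theorem mainTheorem13:
  fixes D :: "real measure" and n :: nat and v :: real
  assumes "prob_space D"
    and "sets D = sets borel"
    and "AE x in D. x \<ge> 0"
    and "integrable D (\<lambda>x. x)"
    and "(\<integral>x. x \<partial>D) = 1"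
    and "n \<ge> 1"
    and "v > 0"
  shows "measure (PiM {..<n} (\<lambda>_. D))
           {x \<in> space (PiM {..<n} (\<lambda>_. D)). real (Delta n x) \<ge> v}
         \<le> 2 / v + 4 * real n / v\<^sup>2"
proof (cases "v \<le> 2 \<or> v\<^sup>2 \<le> 4 * real n")
  case True
  interpret P: prob_space "PiM {..<n} (\<lambda>_. D)"
    using assms(1) by (intro prob_space_PiM)
  have "1 \<le> 2 / v + 4 * real n / v\<^sup>2"
    using True assms(7) by (auto simp: field_simps add_increasing add_increasing2)
  then show ?thesis
    using P.prob_le_1 order_trans by blast
next
  case False
  then have "measure (PiM {..<n} (\<lambda>_. D)) {x \<in> space (PiM {..<n} (\<lambda>_. D)). v \<le> real (Delta n x)}
      \<le> 4 * real n / v\<^sup>2"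
    using assms(1-5) by (intro prob_le_Delta_le) auto
  then show ?thesis
    using assms(7) by (smt (verit) divide_pos_pos)
qed

end
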